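(* (i) Let $P(z,\bar z)=\alpha_{n,0}z^n+P_{n-1}(z,\bar z)$ be a polyanalytic polynomial with $\alpha_{n,0}\in\mathbb{C}\setminus\{0\}$, where $P_{n-1}$ is a polyanalytic polynomial with $\deg(P_{n-1})\leq n-1$. Then $P$ has at most $n^2$ zeros. (ii) Let $P(z,\bar z)=p(z)+\overline{q(z)}$, where $p,q$ are analytic polynomials with $\deg(p)=n>\deg(q)$. Then $P$ has at most $n^2$ zeros. Moreover, in both (i) and (ii), if $P$ has exactly $n^2$ zeros, then $P$ is irreducible.
   Context: A polyanalytic polynomial is a function $\mathbb{C}\to\mathbb{C}$ of the form $P(z,\bar z)=\sum_{j+k\le n}\alpha_{j,k} z^j \bar z^{k}$ with complex coefficients (a polynomial in $z$ and $\bar z$); two such polynomials are equal iff all coefficients agree. Its degree is the largest $j+k$ with $\alpha_{j,k}\neq 0$. $P$ is reducible if $P=P_1P_2$ for polyanalytic polynomials with $\deg(P_1),\deg(P_2)\geq 1$, and irreducible otherwise. A zero of $P$ is a point $z\in\mathbb{C}$ with $P(z,\bar z)=0$; zeros are counted as distinct points. *)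

theory Defs
  imports Complex_Main "HOL-Computational_Algebra.Polynomial"
begin

text \<open>A polyanalytic polynomial P(z, zbar) = sum of a_jk z^j zbar^k is represented as a
  polynomial in zbar whose coefficients are polynomials in z:
  coeff P k is the polynomial in z multiplying zbar^k.\<close>

type_synonym polyanalytic = "complex poly poly"

definition pa_eval :: "polyanalytic \<Rightarrow> complex \<Rightarrow> complex" where
  "pa_eval P z = (\<Sum>k\<le>degree P. poly (coeff P k) z * cnj z ^ k)"

definition pa_deg :: "polyanalytic \<Rightarrow> nat" where
  "pa_deg P = Max ({k + degree (coeff P k) | k. coeff P k \<noteq> 0} \<union> {0})"

definition pa_reducible :: "polyanalytic \<Rightarrow> bool" where
  "pa_reducible P \<longleftrightarrow> (\<exists>P1 P2. P = P1 * P2 \<and> pa_deg P1 \<ge> 1 \<and> pa_deg P2 \<ge> 1)"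

definition pa_irreducible :: "polyanalytic \<Rightarrow> bool" where
  "pa_irreducible P \<longleftrightarrow> \<not> pa_reducible P"

definition pa_zeros :: "polyanalytic \<Rightarrow> complex set" where
  "pa_zeros P = {z. pa_eval P z = 0}"

definition pa_zmonom :: "complex \<Rightarrow> nat \<Rightarrow> polyanalytic" where
  "pa_zmonom a n = [:monom a n:]"

text \<open>p(z) + conj(q(z)) for analytic polynomials p, q: conj(q(z)) = sum conj(q_k) zbar^k.\<close>
definition pa_harmonic :: "complex poly \<Rightarrow> complex poly \<Rightarrow> polyanalytic" where
  "pa_harmonic p q = [:p:] + map_poly (\<lambda>c. [:cnj c:]) q"

end

theory Submission
  imports Defs "HOL-Library.Function_Algebras" "HOL-Library.Indicator_Function"
begin

text \<open>
  Call \<open>A\<close> z-dominant of degree \<open>n\<close> if its only monomial of total degree at least \<open>n\<close> is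
  \<open>\<alpha> z^n\<close> with \<open>\<alpha> \<noteq> 0\<close>; both (i) and (ii) are of this form. On the zero set \<open>S\<close> of such an \<open>A\<close>,
  \<open>z^n\<close> and, by conjugation, \<open>zbar^n\<close> are combinations of monomials of lower total degree, so
  every function \<open>z^i zbar^j\<close> restricted to \<open>S\<close> lies in the span of the \<open>n^2\<close> restrictions with
  \<open>i, j < n\<close>. As Lagrange interpolation in \<open>z\<close> alone produces every function on a finite \<open>S\<close>,
  \<open>|S| \<le> n^2\<close>.

  Substituting \<open>z := t\<close>, \<open>zbar := t w\<close> turns total degree into \<open>t\<close>-degree and z-dominance into
  the leading \<open>t\<close>-coefficient being a nonzero constant. This is multiplicative, so the factors of a
  z-dominant \<open>A = A1 A2\<close> are z-dominant of degrees \<open>d + e = n\<close>, and a nontrivial factorisation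
  has at most \<open>d^2 + e^2 < n^2\<close> zeros.
\<close>

lemma map_poly_add_hom:
  assumes "f 0 = 0" "\<And>a b. f (a + b) = f a + f b"
  shows "map_poly f (p + q) = map_poly f p + map_poly f q"
  by (rule poly_eqI) (simp add: coeff_map_poly assms)

lemma map_poly_mult_hom:
  fixes f :: "'a::comm_ring_1 \<Rightarrow> 'b::comm_ring_1"
  assumes "f 0 = 0" "\<And>a b. f (a + b) = f a + f b" "\<And>a b. f (a * b) = f a * f b"
  shows "map_poly f (p * q) = map_poly f p * map_poly f q"
  by (rule poly_eqI)
     (simp add: coeff_map_poly coeff_mult assms sum_comp_morphism[symmetric, of f] comp_def)

lemma poly_altdef_le:
  fixes p :: "'a::comm_semiring_1 poly"
  assumes "degree p \<le> N"
  shows "poly p x = (\<Sum>i\<le>N. coeff p i * x ^ i)"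
proof -
  have "(\<Sum>i\<le>degree p. coeff p i * x ^ i) = (\<Sum>i\<le>N. coeff p i * x ^ i)"
    using assms by (intro sum.mono_neutral_left) (auto simp: coeff_eq_0)
  then show ?thesis by (simp add: poly_altdef)
qed

lemma pa_eval_conv_poly: "pa_eval P z = poly (map_poly (\<lambda>c. poly c z) P) (cnj z)"
  by (simp add: pa_eval_def poly_altdef_le[OF map_poly_degree_leq] coeff_map_poly)

lemma pa_eval_mult: "pa_eval (A * B) z = pa_eval A z * pa_eval B z"
  unfolding pa_eval_conv_poly by (simp add: map_poly_mult_hom)

lemma pa_zeros_mult: "pa_zeros (A * B) = pa_zeros A \<union> pa_zeros B"
  by (auto simp: pa_zeros_def pa_eval_mult)

lemma pa_eval_eq_sum:
  assumes "finite T" and supp: "\<And>j k. coeff (coeff A k) j \<noteq> 0 \<Longrightarrow> (j, k) \<in> T"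
  shows "pa_eval A x = (\<Sum>(j, k)\<in>T. coeff (coeff A k) j * x ^ j * cnj x ^ k)"
proof -
  define f where "f = (\<lambda>(j, k). coeff (coeff A k) j * x ^ j * cnj x ^ k)"
  define Z where "Z = {(j, k). coeff (coeff A k) j \<noteq> 0}"
  define R where "R = prod.swap ` (SIGMA k:{..degree A}. {..degree (coeff A k)})"
  have "Z \<subseteq> T"
    using supp by (auto simp: Z_def)
  have "Z \<subseteq> R"
  proof clarify
    fix j k
    assume "(j, k) \<in> Z"
    then have "coeff (coeff A k) j \<noteq> 0" by (simp add: Z_def)
    then have "k \<le> degree A" "j \<le> degree (coeff A k)"
      by (auto intro: le_degree)
    then show "(j, k) \<in> R"
      unfolding R_def by (intro rev_image_eqI[of "(k, j)"]) auto
  qed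
  have "pa_eval A x = (\<Sum>k\<le>degree A. \<Sum>j\<le>degree (coeff A k). f (j, k))"
    by (simp add: pa_eval_def poly_altdef sum_distrib_right f_def)
  also have "\<dots> = sum (f \<circ> prod.swap) (SIGMA k:{..degree A}. {..degree (coeff A k)})"
    by (simp add: sum.Sigma case_prod_unfold prod.swap_def)
  also have "\<dots> = sum f R"
    unfolding R_def by (simp add: sum.reindex)
  also have "\<dots> = sum f Z"
    using \<open>Z \<subseteq> R\<close> by (intro sum.mono_neutral_right) (auto simp: R_def Z_def f_def)
  also have "\<dots> = sum f T"
    using \<open>Z \<subseteq> T\<close> \<open>finite T\<close> by (intro sum.mono_neutral_left) (auto simp: Z_def f_def)
  finally show ?thesis
    by (simp add: f_def)
qed

text \<open>\<open>A(t, t w)\<close> in \<open>\<complex>[w][t]\<close>: its \<open>t\<close>-degree is the total degree of \<open>A\<close>, and its leading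
  \<open>t\<close>-coefficient is the top-degree homogeneous part of \<open>A\<close> at \<open>z = 1\<close>, \<open>zbar = w\<close>.\<close>

definition pa_grade :: "polyanalytic \<Rightarrow> complex poly poly" where
  "pa_grade A = poly (map_poly (map_poly (\<lambda>a. [:a:])) A) (monom (monom 1 1) 1)"

lemma pa_grade_mult: "pa_grade (A * B) = pa_grade A * pa_grade B"
  unfolding pa_grade_def
  by (simp add: map_poly_mult_hom map_poly_add_hom)

lemma coeff_coeff_pa_grade:
  "coeff (coeff (pa_grade A) m) k = (if k \<le> m then coeff (coeff A k) (m - k) else 0)"
proof -
  have grade_sum: "pa_grade A = (\<Sum>i\<le>degree A. monom (monom 1 i) i * map_poly (\<lambda>a. [:a:]) (coeff A i))"
    unfolding pa_grade_def
    by (simp add: poly_altdef_le[OF map_poly_degree_leq] coeff_map_poly monom_power mult.commute)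
  have "coeff (coeff (pa_grade A) m) k =
      (\<Sum>i\<le>degree A. if i = k then (if k \<le> m then coeff (coeff A k) (m - k) else 0) else 0)"
    unfolding grade_sum coeff_sum by (intro sum.cong) (auto simp: coeff_monom_mult coeff_map_poly)
  also have "\<dots> = (if k \<le> m then coeff (coeff A k) (m - k) else 0)"
    by (auto simp: coeff_eq_0 not_le)
  finally show ?thesis .
qed

definition z_dominant :: "nat \<Rightarrow> polyanalytic \<Rightarrow> bool" where
  "z_dominant n A \<longleftrightarrow> coeff (coeff A 0) n \<noteq> 0 \<and>
     (\<forall>j k. coeff (coeff A k) j \<noteq> 0 \<longrightarrow> (j, k) = (n, 0) \<or> j + k < n)"

lemma pa_grade_z_dominant:
  assumes dom: "z_dominant n A"
  shows "pa_grade A \<noteq> 0" "degree (pa_grade A) = n" "degree (lead_coeff (pa_grade A)) = 0"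
proof -
  let ?G = "pa_grade A"
  have above: "coeff ?G m = 0" if "n < m" for m
  proof (rule poly_eqI)
    fix k
    show "coeff (coeff ?G m) k = coeff 0 k"
      using dom that by (fastforce simp: z_dominant_def coeff_coeff_pa_grade)
  qed
  have "coeff (coeff ?G n) 0 \<noteq> 0"
    using dom by (simp add: z_dominant_def coeff_coeff_pa_grade)
  then have top: "coeff ?G n \<noteq> 0"
    by auto
  then show "?G \<noteq> 0"
    by auto
  from top above show deg: "degree ?G = n"
    by (meson degree_le le_antisym le_degree)
  have "coeff (lead_coeff ?G) k = 0" if "0 < k" for k
    using dom that by (fastforce simp: deg z_dominant_def coeff_coeff_pa_grade)
  then show "degree (lead_coeff ?G) = 0"
    by (meson degree_le le_zero_eq)
qed

lemma z_dominant_if_pa_grade: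
  assumes nz: "pa_grade A \<noteq> 0" and deg: "degree (pa_grade A) = n"
    and lc: "degree (lead_coeff (pa_grade A)) = 0"
  shows "z_dominant n A"
proof -
  let ?G = "pa_grade A"
  have "coeff (coeff A 0) n = coeff (lead_coeff ?G) 0"
    by (simp add: deg coeff_coeff_pa_grade)
  also have "\<dots> \<noteq> 0"
    using nz lc by (metis leading_coeff_0_iff)
  finally have "coeff (coeff A 0) n \<noteq> 0" .
  moreover have "(j, k) = (n, 0) \<or> j + k < n" if "coeff (coeff A k) j \<noteq> 0" for j k
  proof -
    have ne: "coeff (coeff ?G (j + k)) k \<noteq> 0"
      using that by (simp add: coeff_coeff_pa_grade)
    then have "coeff ?G (j + k) \<noteq> 0"
      by auto
    then have "j + k \<le> n"
      using deg le_degree by force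
    moreover have "k = 0" if "j + k = n"
      using ne lc le_degree[of "lead_coeff ?G" k] by (simp add: deg that)
    ultimately show ?thesis
      by auto
  qed
  ultimately show ?thesis
    by (simp add: z_dominant_def)
qed

lemma z_dominant_factors:
  assumes "z_dominant n (A * B)"
  obtains d e where "z_dominant d A" "z_dominant e B" "d + e = n"
proof -
  have nz: "pa_grade A \<noteq> 0" "pa_grade B \<noteq> 0"
    and deg: "degree (pa_grade A * pa_grade B) = n"
    and lc: "degree (lead_coeff (pa_grade A) * lead_coeff (pa_grade B)) = 0"
    using pa_grade_z_dominant[OF assms] by (auto simp: pa_grade_mult lead_coeff_mult)
  have "degree (lead_coeff (pa_grade A)) = 0" "degree (lead_coeff (pa_grade B)) = 0"
    using lc nz by (simp_all add: degree_mult_eq)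
  with nz have "z_dominant (degree (pa_grade A)) A" "z_dominant (degree (pa_grade B)) B"
    by (simp_all add: z_dominant_if_pa_grade)
  moreover have "degree (pa_grade A) + degree (pa_grade B) = n"
    using deg nz by (simp add: degree_mult_eq)
  ultimately show ?thesis by (rule that)
qed

lemma pa_deg_le_iff: "pa_deg Q \<le> d \<longleftrightarrow> (\<forall>j k. coeff (coeff Q k) j \<noteq> 0 \<longrightarrow> j + k \<le> d)"
proof -
  let ?D = "{k + degree (coeff Q k) | k. coeff Q k \<noteq> 0}"
  have "?D \<subseteq> (\<lambda>k. k + degree (coeff Q k)) ` {..degree Q}"
    using le_degree by fastforce
  then have "finite (?D \<union> {0})"
    by (simp add: finite_subset)
  then have "pa_deg Q \<le> d \<longleftrightarrow> (\<forall>k. coeff Q k \<noteq> 0 \<longrightarrow> k + degree (coeff Q k) \<le> d)"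
    unfolding pa_deg_def by (subst Max_le_iff) auto
  also have "\<dots> \<longleftrightarrow> (\<forall>j k. coeff (coeff Q k) j \<noteq> 0 \<longrightarrow> j + k \<le> d)"
  proof
    assume "\<forall>k. coeff Q k \<noteq> 0 \<longrightarrow> k + degree (coeff Q k) \<le> d"
    then show "\<forall>j k. coeff (coeff Q k) j \<noteq> 0 \<longrightarrow> j + k \<le> d"
      by (metis add.commute add_le_mono1 coeff_0 le_degree order_trans)
  next
    assume "\<forall>j k. coeff (coeff Q k) j \<noteq> 0 \<longrightarrow> j + k \<le> d"
    then show "\<forall>k. coeff Q k \<noteq> 0 \<longrightarrow> k + degree (coeff Q k) \<le> d"
      by (metis add.commute leading_coeff_0_iff)
  qed
  finally show ?thesis .
qed

lemma coeff_le_pa_deg: "coeff (coeff Q k) j \<noteq> 0 \<Longrightarrow> j + k \<le> pa_deg Q"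
  using pa_deg_le_iff by blast

lemma pa_deg_z_dominant:
  assumes "z_dominant n A"
  shows "pa_deg A = n"
proof (rule antisym)
  show "pa_deg A \<le> n"
    using assms unfolding pa_deg_le_iff z_dominant_def by fastforce
  show "n \<le> pa_deg A"
    using assms coeff_le_pa_deg[of A 0 n] by (simp add: z_dominant_def)
qed

lemma z_dominant_zmonom_add:
  assumes "\<alpha> \<noteq> 0" "Q = 0 \<or> pa_deg Q < n"
  shows "z_dominant n (pa_zmonom \<alpha> n + Q)"
proof -
  have low: "j + k < n" if "coeff (coeff Q k) j \<noteq> 0" for j k
    using assms(2) coeff_le_pa_deg[OF that] that by auto
  have coeff_eq: "coeff (coeff (pa_zmonom \<alpha> n + Q) k) j =
      (if (j, k) = (n, 0) then \<alpha> else 0) + coeff (coeff Q k) j" for j k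
    by (cases k) (auto simp: pa_zmonom_def)
  have "coeff (coeff Q 0) n = 0"
    using low by fastforce
  with assms(1) show ?thesis
    unfolding z_dominant_def coeff_eq by (auto dest: low split: if_splits)
qed

lemma z_dominant_harmonic:
  assumes "degree p = n" "degree q < n"
  shows "z_dominant n (pa_harmonic p q)"
proof -
  have "coeff (coeff (pa_harmonic p q) k) j =
      (if k = 0 then coeff p j else 0) + (if j = 0 then cnj (coeff q k) else 0)" for j k
    by (cases k; cases j) (auto simp: pa_harmonic_def coeff_map_poly)
  moreover have "coeff p j \<noteq> 0 \<Longrightarrow> j \<le> n" "coeff q k \<noteq> 0 \<Longrightarrow> k < n" for j k
    using assms le_degree by force+
  moreover have "0 < n" "coeff p n \<noteq> 0"
    using assms by auto
  ultimately show ?thesis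
    unfolding z_dominant_def by (auto split: if_splits simp: le_less)
qed

lemma finite_pairs_sum_less: "finite {(a, b). a + b < (n::nat)}"
  by (rule finite_subset[of _ "{..<n} \<times> {..<n}"]) auto

lemma pa_eval_z_dominant:
  assumes "z_dominant n A"
  shows "pa_eval A x = coeff (coeff A 0) n * x ^ n +
           (\<Sum>(j, k)\<in>{(j, k). j + k < n}. coeff (coeff A k) j * x ^ j * cnj x ^ k)"
proof -
  have "pa_eval A x = (\<Sum>(j, k)\<in>insert (n, 0) {(j, k). j + k < n}. coeff (coeff A k) j * x ^ j * cnj x ^ k)"
    using assms by (intro pa_eval_eq_sum) (auto simp: finite_pairs_sum_less z_dominant_def)
  then show ?thesis
    by (simp add: finite_pairs_sum_less)
qed

text \<open>A function on a subset \<open>S\<close> is represented by its extension by zero,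
  \<open>\<lambda>x. indicator S x * f x\<close>, so that all spans live in the one vector space \<open>'a \<Rightarrow> 'k\<close>.\<close>

interpretation fun_space: vector_space "\<lambda>(c::'k::field) (f::'a \<Rightarrow> 'k) x. c * f x"
  by unfold_locales (auto simp: fun_eq_iff algebra_simps)

lemma sum_fun_apply: "(\<Sum>i\<in>I. f i) x = (\<Sum>i\<in>I. f i x)"
  by (induction I rule: infinite_finite_induct) auto

lemma card_le_card_if_indicators_in_span:
  fixes S :: "'a set" and B :: "('a \<Rightarrow> 'k::field) set"
  assumes "finite B" and span: "\<And>s. s \<in> S \<Longrightarrow> indicator {s} \<in> fun_space.span B"
  shows "card S \<le> card B"
proof (cases "finite S")
  case True
  let ?\<delta> = "\<lambda>s. indicator {s} :: 'a \<Rightarrow> 'k"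
  have inj: "inj_on ?\<delta> S"
  proof (rule inj_onI)
    fix s t
    assume "?\<delta> s = ?\<delta> t"
    then have "?\<delta> s s = ?\<delta> t s" by simp
    then show "s = t" by (simp add: indicator_def split: if_splits)
  qed
  have "fun_space.independent (?\<delta> ` S)"
  proof (rule fun_space.independent_if_scalars_zero)
    show "finite (?\<delta> ` S)"
      using True by simp
    fix f g
    assume sum0: "(\<Sum>g\<in>?\<delta> ` S. (\<lambda>x. f g * g x)) = 0" and "g \<in> ?\<delta> ` S"
    then obtain s where s: "s \<in> S" "g = ?\<delta> s" by auto
    have "0 = (\<Sum>t\<in>S. f (?\<delta> t) * ?\<delta> t s)"
      using fun_cong[OF sum0, of s] by (simp add: sum.reindex[OF inj] sum_fun_apply)
    also have "\<dots> = f g"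
      using s True by (simp add: indicator_def)
    finally show "f g = 0" ..
  qed
  then have "card (?\<delta> ` S) \<le> card B"
    using fun_space.independent_span_bound[OF \<open>finite B\<close>] span by blast
  then show ?thesis
    by (simp add: card_image[OF inj])
qed simp

lemma indicator_in_span_if_restricted_powers:
  fixes S :: "'k::field set"
  assumes "finite S" "s \<in> S"
    and powers: "\<And>i. (\<lambda>x. indicator S x * x ^ i) \<in> fun_space.span B"
  shows "indicator {s} \<in> fun_space.span B"
proof -
  define p where "p = (\<Prod>t\<in>S - {s}. [:- t, 1:])"
  have ps: "poly p s \<noteq> 0"
    using \<open>finite S\<close> by (simp add: p_def poly_prod)
  have "(\<lambda>x. indicator S x * poly p x) = (\<lambda>x. poly p s * indicator {s} x)"
  proof
    fix x
    have "poly p x = 0" if "x \<in> S - {s}"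
      using \<open>finite S\<close> that by (auto simp: p_def poly_prod)
    then show "indicator S x * poly p x = poly p s * indicator {s} x"
      using \<open>s \<in> S\<close> by (cases "x \<in> S"; cases "x = s") auto
  qed
  moreover have "(\<lambda>x. indicator S x * poly p x) =
      (\<Sum>i\<le>degree p. (\<lambda>x. coeff p i * (indicator S x * x ^ i)))"
    by (rule ext) (simp add: poly_altdef sum_fun_apply sum_distrib_left algebra_simps)
  then have "(\<lambda>x. indicator S x * poly p x) \<in> fun_space.span B"
    using powers by (auto intro!: fun_space.span_sum fun_space.span_scale)
  ultimately have "(\<lambda>x. inverse (poly p s) * (poly p s * indicator {s} x)) \<in> fun_space.span B"
    by (metis fun_space.span_scale)
  then show ?thesis
    using ps by simp
qed

lemma restricted_monomial_in_span_if_lower: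
  fixes u v :: "'a \<Rightarrow> 'k::field"
  assumes pow: "\<And>x. x \<in> S \<Longrightarrow> u x ^ n = (\<Sum>(a, b)\<in>{(a, b). a + b < n}. c a b * u x ^ a * v x ^ b)"
    and "n \<le> i"
    and lower: "\<And>a b. a + b < i + j \<Longrightarrow> (\<lambda>x. indicator S x * (u x ^ a * v x ^ b)) \<in> fun_space.span B"
  shows "(\<lambda>x. indicator S x * (u x ^ i * v x ^ j)) \<in> fun_space.span B"
proof -
  let ?L = "{(a, b). a + b < n}"
  have "(\<lambda>x. indicator S x * (u x ^ i * v x ^ j)) =
      (\<Sum>(a, b)\<in>?L. (\<lambda>x. c a b * (indicator S x * (u x ^ (i - n + a) * v x ^ (j + b)))))"
  proof
    fix x
    show "indicator S x * (u x ^ i * v x ^ j) =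
        (\<Sum>(a, b)\<in>?L. (\<lambda>x. c a b * (indicator S x * (u x ^ (i - n + a) * v x ^ (j + b))))) x"
    proof (cases "x \<in> S")
      case True
      have "u x ^ i * v x ^ j = u x ^ (i - n) * v x ^ j * u x ^ n"
        using \<open>n \<le> i\<close> by (simp add: power_add[symmetric])
      also have "\<dots> = (\<Sum>(a, b)\<in>?L. c a b * (u x ^ (i - n + a) * v x ^ (j + b)))"
        by (simp add: pow[OF True] sum_distrib_left power_add case_prod_unfold algebra_simps)
      finally show ?thesis
        using True by (simp add: sum_fun_apply case_prod_unfold)
    qed (simp add: sum_fun_apply case_prod_unfold)
  qed
  also have "\<dots> \<in> fun_space.span B"
  proof (intro fun_space.span_sum, clarify)
    fix a b
    assume "a + b < n"
    with \<open>n \<le> i\<close> have "i - n + a + (j + b) < i + j" by linarith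
    then show "(\<lambda>x. c a b * (indicator S x * (u x ^ (i - n + a) * v x ^ (j + b)))) \<in> fun_space.span B"
      by (intro fun_space.span_scale lower)
  qed
  finally show ?thesis .
qed

lemma restricted_monomial_in_span_box:
  fixes u v :: "'a \<Rightarrow> 'k::field"
  assumes u_pow: "\<And>x. x \<in> S \<Longrightarrow> u x ^ n = (\<Sum>(a, b)\<in>{(a, b). a + b < n}. c a b * u x ^ a * v x ^ b)"
    and v_pow: "\<And>x. x \<in> S \<Longrightarrow> v x ^ n = (\<Sum>(a, b)\<in>{(a, b). a + b < n}. d a b * v x ^ a * u x ^ b)"
  shows "(\<lambda>x. indicator S x * (u x ^ i * v x ^ j))
           \<in> fun_space.span ((\<lambda>(a, b) x. indicator S x * (u x ^ a * v x ^ b)) ` ({..<n} \<times> {..<n}))"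
    (is "?m i j \<in> fun_space.span ?B")
proof (induction "i + j" arbitrary: i j rule: less_induct)
  case less
  consider "i < n" "j < n" | "n \<le> i" | "n \<le> j"
    by linarith
  then show ?case
  proof cases
    case 1
    then show ?thesis
      by (intro fun_space.span_base) auto
  next
    case 2
    have "?m a b \<in> fun_space.span ?B" if "a + b < i + j" for a b
      using less that by simp
    from u_pow 2 this show ?thesis
      by (rule restricted_monomial_in_span_if_lower)
  next
    case 3
    have "(\<lambda>x. indicator S x * (v x ^ a * u x ^ b)) \<in> fun_space.span ?B" if "a + b < j + i" for a b
      using less[of b a] that by (simp add: mult.commute add.commute)
    with v_pow 3 have "(\<lambda>x. indicator S x * (v x ^ j * u x ^ i)) \<in> fun_space.span ?B"
      by (rule restricted_monomial_in_span_if_lower)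
    then show ?thesis
      by (simp add: mult.commute)
  qed
qed

lemma card_le_square_if_monic_relation:
  fixes S :: "complex set"
  assumes "finite S"
    and rel: "\<And>x. x \<in> S \<Longrightarrow> x ^ n = (\<Sum>(a, b)\<in>{(a, b). a + b < n}. c a b * x ^ a * cnj x ^ b)"
  shows "card S \<le> n\<^sup>2"
proof -
  define B where "B = (\<lambda>(a, b) x. indicator S x * (x ^ a * cnj x ^ b)) ` ({..<n} \<times> {..<n})"
  have rel_cnj: "cnj x ^ n = (\<Sum>(a, b)\<in>{(a, b). a + b < n}. cnj (c a b) * cnj x ^ a * x ^ b)"
    if "x \<in> S" for x
    using arg_cong[OF rel[OF that], of cnj] by (simp add: case_prod_unfold)
  have monomial: "(\<lambda>x. indicator S x * (x ^ i * cnj x ^ j)) \<in> fun_space.span B" for i j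
    unfolding B_def
    by (rule restricted_monomial_in_span_box[where u = "\<lambda>x. x" and v = cnj, OF rel rel_cnj])
  have "indicator {s} \<in> fun_space.span B" if "s \<in> S" for s
    using \<open>finite S\<close> that monomial[of _ 0] by (intro indicator_in_span_if_restricted_powers) simp_all
  then have "card S \<le> card B"
    by (intro card_le_card_if_indicators_in_span) (simp_all add: B_def)
  also have "card B \<le> n\<^sup>2"
    unfolding B_def power2_eq_square
    using card_image_le[of "{..<n} \<times> {..<n}"] by (simp add: card_cartesian_product)
  finally show ?thesis .
qed

lemma card_subset_pa_zeros_le:
  assumes dom: "z_dominant n A" and "finite S" "S \<subseteq> pa_zeros A"
  shows "card S \<le> n\<^sup>2"
proof (rule card_le_square_if_monic_relation[OF \<open>finite S\<close>])
  let ?\<alpha> = "coeff (coeff A 0) n"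
  fix x
  assume "x \<in> S"
  then have "?\<alpha> * x ^ n + (\<Sum>(j, k)\<in>{(j, k). j + k < n}. coeff (coeff A k) j * x ^ j * cnj x ^ k) = 0"
    using assms pa_eval_z_dominant[OF dom] by (auto simp: pa_zeros_def)
  moreover have "?\<alpha> \<noteq> 0"
    using dom by (simp add: z_dominant_def)
  ultimately show "x ^ n = (\<Sum>(j, k)\<in>{(j, k). j + k < n}. - coeff (coeff A k) j / ?\<alpha> * x ^ j * cnj x ^ k)"
    by (simp add: case_prod_unfold sum_divide_distrib[symmetric] sum_negf field_simps add_eq_0_iff)
qed

lemma z_dominant_pa_zeros_bound:
  assumes "z_dominant n A"
  shows "finite (pa_zeros A) \<and> card (pa_zeros A) \<le> n\<^sup>2"
proof -
  have "finite (pa_zeros A)"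
  proof (rule ccontr)
    assume "infinite (pa_zeros A)"
    then obtain S where "S \<subseteq> pa_zeros A" "finite S" "card S = n\<^sup>2 + 1"
      using infinite_arbitrarily_large by blast
    then show False
      using card_subset_pa_zeros_le[OF assms] by fastforce
  qed
  then show ?thesis
    using card_subset_pa_zeros_le[OF assms] by blast
qed

lemma z_dominant_irreducible:
  assumes dom: "z_dominant n A" and card: "card (pa_zeros A) = n\<^sup>2"
  shows "pa_irreducible A"
  unfolding pa_irreducible_def pa_reducible_def
proof clarify
  fix A1 A2
  assume A: "A = A1 * A2" and deg: "1 \<le> pa_deg A1" "1 \<le> pa_deg A2"
  obtain d e where dom12: "z_dominant d A1" "z_dominant e A2" and "d + e = n"
    using dom A z_dominant_factors by blast
  have "0 < d" "0 < e"
    using deg dom12 by (simp_all add: pa_deg_z_dominant)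
  have "card (pa_zeros A) \<le> card (pa_zeros A1) + card (pa_zeros A2)"
    by (simp add: A pa_zeros_mult card_Un_le)
  also have "\<dots> \<le> d\<^sup>2 + e\<^sup>2"
    using z_dominant_pa_zeros_bound[OF dom12(1)] z_dominant_pa_zeros_bound[OF dom12(2)] by simp
  also have "\<dots> < n\<^sup>2"
    using \<open>0 < d\<close> \<open>0 < e\<close> \<open>d + e = n\<close> by (auto simp: power2_sum)
  finally show False
    using card by simp
qed

theorem corollary2p14:
  shows
  "(\<forall>(\<alpha>::complex) (n::nat) (Q::polyanalytic).
       \<alpha> \<noteq> 0 \<and> (Q = 0 \<or> pa_deg Q < n) \<longrightarrow>
       (let P = pa_zmonom \<alpha> n + Q in
          finite (pa_zeros P) \<and> card (pa_zeros P) \<le> n ^ 2 \<and>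
          (card (pa_zeros P) = n ^ 2 \<longrightarrow> pa_irreducible P)))
   \<and>
   (\<forall>(p::complex poly) (q::complex poly) (n::nat).
       degree p = n \<and> degree q < n \<longrightarrow>
       (let P = pa_harmonic p q in
          finite (pa_zeros P) \<and> card (pa_zeros P) \<le> n ^ 2 \<and>
          (card (pa_zeros P) = n ^ 2 \<longrightarrow> pa_irreducible P)))"
  unfolding Let_def
  using z_dominant_pa_zeros_bound z_dominant_irreducible z_dominant_zmonom_add z_dominant_harmonic
  by blast

end
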